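(* Let $A$ be a $C^*$-algebra, let $X$ be a full Hilbert $A$-module, let $H,K$ be Hilbert spaces, and let $\Phi,\Psi\in\mathcal{C}(X,L(H,K))$. Then $\Phi\backsim\Psi$ if and only if there is a partial isometry $V\in L(K)$ with $VV^*=p_{[\Phi(X)H]}$ and $V^*V=p_{[\Psi(X)H]}$ such that $\Phi(x)=V\Psi(x)$ for all $x\in X$.
   Context: A Hilbert $A$-module $X$ is a right $A$-module with an $A$-valued inner product $\langle\cdot,\cdot\rangle$ (conjugate linear in the first and $A$-linear in the second variable) that is complete in the norm $\|x\|=\|\langle x,x\rangle\|^{1/2}$; it is full if the closed two-sided ideal of $A$ generated by $\{\langle x,y\rangle: x,y\in X\}$ is $A$. $L(H,K)$ denotes the bounded linear operators from $H$ to $K$, $L(K)=L(K,K)$. A map $\Phi:X\to L(H,K)$ is called completely positive if there is a completely positive map $\varphi:A\to L(H)$ such that $\Phi(x)^*\Phi(y)=\varphi(\langle x,y\rangle)$ for all $x,y\in X$; $\mathcal{C}(X,L(H,K))$ denotes the set of all such maps. For $\Phi,\Psi\in\mathcal{C}(X,L(H,K))$, write $\Phi\backsim\Psi$ if $\Phi(x)^*\Phi(x)=\Psi(x)^*\Psi(x)$ for all $x\in X$. For a subset $Y$ of a Hilbert space, $[Y]$ denotes the closed linear span of $Y$; $\Phi(X)H=\{\Phi(x)h:x\in X,h\in H\}$; $p_M$ denotes the orthogonal projection onto a closed subspace $M$. *)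

theory Defs
  imports "HOL-Analysis.Analysis"
begin

class complex_vector = real_vector +
  fixes scaleC :: "complex \<Rightarrow> 'a \<Rightarrow> 'a"
  assumes scaleC_add_right: "scaleC c (x + y) = scaleC c x + scaleC c y"
    and scaleC_add_left: "scaleC (c + d) x = scaleC c x + scaleC d x"
    and scaleC_scaleC: "scaleC c (scaleC d x) = scaleC (c * d) x"
    and scaleC_one: "scaleC 1 x = x"
    and scaleR_scaleC: "scaleR r x = scaleC (complex_of_real r) x"

class complex_normed_vector = complex_vector + real_normed_vector +
  assumes norm_scaleC: "norm (scaleC c x) = cmod c * norm x"

class complex_banach = complex_normed_vector + complete_space

class complex_inner = complex_normed_vector +
  fixes cinner :: "'a \<Rightarrow> 'a \<Rightarrow> complex"
  assumes cinner_commute: "cinner x y = cnj (cinner y x)"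
    and cinner_add_left: "cinner (x + y) z = cinner x z + cinner y z"
    and cinner_scaleC_left: "cinner (scaleC c x) y = cnj c * cinner x y"
    and cinner_nonneg: "Re (cinner x x) \<ge> 0"
    and cinner_eq_zero_iff: "cinner x x = 0 \<longleftrightarrow> x = 0"
    and norm_eq_sqrt_cinner: "norm x = sqrt (Re (cinner x x))"

class chilbert_space = complex_inner + complete_space

class complex_algebra = complex_vector + ring +
  assumes scaleC_mult_left: "scaleC c x * y = scaleC c (x * y)"
    and scaleC_mult_right: "x * scaleC c y = scaleC c (x * y)"

class complex_normed_algebra = complex_algebra + complex_normed_vector +
  assumes norm_mult_ineq_C: "norm (x * y) \<le> norm x * norm y"

class cstar_algebra = complex_normed_algebra + complete_space +
  fixes cstar :: "'a \<Rightarrow> 'a"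
  assumes cstar_cstar: "cstar (cstar x) = x"
    and cstar_add: "cstar (x + y) = cstar x + cstar y"
    and cstar_scaleC: "cstar (scaleC c x) = scaleC (cnj c) (cstar x)"
    and cstar_mult: "cstar (x * y) = cstar y * cstar x"
    and cstar_identity: "norm (cstar x * x) = (norm x)\<^sup>2"

definition cpositive :: "'a::cstar_algebra \<Rightarrow> bool" where
  "cpositive a \<longleftrightarrow> (\<exists>b. a = cstar b * b)"

definition hilbert_module ::
  "('x::complex_banach \<Rightarrow> 'a::cstar_algebra \<Rightarrow> 'x) \<Rightarrow> ('x \<Rightarrow> 'x \<Rightarrow> 'a) \<Rightarrow> bool" where
  "hilbert_module act ip \<longleftrightarrow>
     (\<forall>x y a. act (x + y) a = act x a + act y a) \<and>
     (\<forall>x a b. act x (a + b) = act x a + act x b) \<and>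
     (\<forall>x a b. act x (a * b) = act (act x a) b) \<and>
     (\<forall>c x a. act (scaleC c x) a = scaleC c (act x a)) \<and>
     (\<forall>c x a. act x (scaleC c a) = scaleC c (act x a)) \<and>
     (\<forall>x y z. ip x (y + z) = ip x y + ip x z) \<and>
     (\<forall>c x y. ip x (scaleC c y) = scaleC c (ip x y)) \<and>
     (\<forall>x y a. ip x (act y a) = ip x y * a) \<and>
     (\<forall>x y. ip y x = cstar (ip x y)) \<and>
     (\<forall>x. cpositive (ip x x)) \<and>
     (\<forall>x. ip x x = 0 \<longrightarrow> x = 0) \<and>
     (\<forall>x. norm x = sqrt (norm (ip x x)))"

definition csubspace :: "'a::complex_vector set \<Rightarrow> bool" where
  "csubspace M \<longleftrightarrow> 0 \<in> M \<and> (\<forall>x\<in>M. \<forall>y\<in>M. x + y \<in> M) \<and> (\<forall>c. \<forall>x\<in>M. scaleC c x \<in> M)"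

definition closed_ideal :: "'a::cstar_algebra set \<Rightarrow> bool" where
  "closed_ideal I \<longleftrightarrow> csubspace I \<and> closed I \<and> (\<forall>a. \<forall>i\<in>I. a * i \<in> I \<and> i * a \<in> I)"

definition full_module :: "('x \<Rightarrow> 'x \<Rightarrow> 'a::cstar_algebra) \<Rightarrow> bool" where
  "full_module ip \<longleftrightarrow>
     \<Inter>{I. closed_ideal I \<and> {ip x y | x y. True} \<subseteq> I} = UNIV"

definition bclinear :: "('h::complex_normed_vector \<Rightarrow> 'k::complex_normed_vector) \<Rightarrow> bool" where
  "bclinear T \<longleftrightarrow> (\<forall>x y. T (x + y) = T x + T y) \<and> (\<forall>c x. T (scaleC c x) = scaleC c (T x)) \<and>
     (\<exists>C. \<forall>x. norm (T x) \<le> C * norm x)"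

definition adj :: "('h::complex_inner \<Rightarrow> 'k::complex_inner) \<Rightarrow> ('k \<Rightarrow> 'h)" where
  "adj T = (SOME S. \<forall>x y. cinner (T x) y = cinner x (S y))"

definition ccspan :: "'a::complex_normed_vector set \<Rightarrow> 'a set" where
  "ccspan S = \<Inter>{M. csubspace M \<and> closed M \<and> S \<subseteq> M}"

definition proj :: "'a::chilbert_space set \<Rightarrow> ('a \<Rightarrow> 'a)" where
  "proj M = (THE P. \<forall>x. P x \<in> M \<and> (\<forall>m\<in>M. cinner m (x - P x) = 0))"

definition partial_isometry :: "('k::chilbert_space \<Rightarrow> 'k) \<Rightarrow> bool" where
  "partial_isometry V \<longleftrightarrow> bclinear V \<and> V \<circ> adj V \<circ> V = V"

text \<open>Matrices in M_n(A) are represented as functions nat => nat => 'a, entries with indices < n.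
  An operator matrix in M_n(L(H)) is positive iff it is a positive operator on H^n.\<close>
definition positive_matrix :: "nat \<Rightarrow> (nat \<Rightarrow> nat \<Rightarrow> 'a::cstar_algebra) \<Rightarrow> bool" where
  "positive_matrix n M \<longleftrightarrow>
     (\<exists>B. \<forall>i<n. \<forall>j<n. M i j = (\<Sum>k<n. cstar (B k i) * B k j))"

definition positive_op_matrix :: "nat \<Rightarrow> (nat \<Rightarrow> nat \<Rightarrow> 'h::chilbert_space \<Rightarrow> 'h) \<Rightarrow> bool" where
  "positive_op_matrix n T \<longleftrightarrow>
     (\<forall>h::nat \<Rightarrow> 'h. Im (\<Sum>i<n. \<Sum>j<n. cinner (h i) (T i j (h j))) = 0 \<and>
                     Re (\<Sum>i<n. \<Sum>j<n. cinner (h i) (T i j (h j))) \<ge> 0)"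

definition completely_positive :: "('a::cstar_algebra \<Rightarrow> 'h::chilbert_space \<Rightarrow> 'h) \<Rightarrow> bool" where
  "completely_positive \<phi> \<longleftrightarrow>
     (\<forall>a. bclinear (\<phi> a)) \<and>
     (\<forall>a b. \<phi> (a + b) = (\<lambda>h. \<phi> a h + \<phi> b h)) \<and>
     (\<forall>c a. \<phi> (scaleC c a) = (\<lambda>h. scaleC c (\<phi> a h))) \<and>
     (\<forall>n M. positive_matrix n M \<longrightarrow> positive_op_matrix n (\<lambda>i j. \<phi> (M i j)))"

definition CP_maps :: "('x \<Rightarrow> 'x \<Rightarrow> 'a::cstar_algebra) \<Rightarrow> ('x \<Rightarrow> 'h::chilbert_space \<Rightarrow> 'k::chilbert_space) set" where
  "CP_maps ip = {\<Phi>. (\<forall>x. bclinear (\<Phi> x)) \<and>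
     (\<exists>\<phi>::'a \<Rightarrow> 'h \<Rightarrow> 'h. completely_positive \<phi> \<and> (\<forall>x y. adj (\<Phi> x) \<circ> \<Phi> y = \<phi> (ip x y)))}"

definition cp_equiv :: "('x \<Rightarrow> 'h::chilbert_space \<Rightarrow> 'k::chilbert_space) \<Rightarrow> ('x \<Rightarrow> 'h \<Rightarrow> 'k) \<Rightarrow> bool" where
  "cp_equiv \<Phi> \<Psi> \<longleftrightarrow> (\<forall>x. adj (\<Phi> x) \<circ> \<Phi> x = adj (\<Psi> x) \<circ> \<Psi> x)"

end

theory Submission
  imports Defs
begin

text \<open>
  If \<open>\<Phi>(x)\<^sup>*\<Phi>(x) = \<Psi>(x)\<^sup>*\<Psi>(x)\<close> for all \<open>x\<close>, write \<open>\<Phi>(x)\<^sup>*\<Phi>(y) = \<phi>(\<langle>x,y\<rangle>)\<close> and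
  \<open>\<Psi>(x)\<^sup>*\<Psi>(y) = \<psi>(\<langle>x,y\<rangle>)\<close>: the difference \<open>(x,y) \<mapsto> \<phi>(\<langle>x,y\<rangle>) - \<psi>(\<langle>x,y\<rangle>)\<close> is sesquilinear
  and vanishes on the diagonal, so it vanishes by polarization, i.e.
  \<open>\<langle>\<Phi>(x)h, \<Phi>(y)k\<rangle> = \<langle>\<Psi>(x)h, \<Psi>(y)k\<rangle>\<close>. Hence \<open>\<Sigma> \<Psi>(x\<^sub>i)h\<^sub>i \<mapsto> \<Sigma> \<Phi>(x\<^sub>i)h\<^sub>i\<close> is a well defined
  isometric linear relation; the closure of its graph is the graph of a unitary from \<open>[\<Psi>(X)H]\<close>
  onto \<open>[\<Phi>(X)H]\<close>, and precomposing with \<open>p\<^bsub>[\<Psi>(X)H]\<^esub>\<close> gives the partial isometry \<open>V\<close>.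
  Conversely \<open>\<Phi>(x)\<^sup>*\<Phi>(x) = \<Psi>(x)\<^sup>*V\<^sup>*V\<Psi>(x) = \<Psi>(x)\<^sup>*\<Psi>(x)\<close> because \<open>V\<^sup>*V\<close> fixes \<open>\<Psi>(X)H\<close>.
\<close>

section \<open>Complex inner product spaces\<close>

lemma scaleC_zero_right [simp]: "scaleC c (0::'a::complex_vector) = 0"
  by (metis add_cancel_right_right scaleC_add_right)

lemma scaleC_minus1_left: "scaleC (-1) (x::'a::complex_vector) = - x"
  by (metis of_real_1 of_real_minus scaleR_minus1_left scaleR_scaleC)

lemma scaleC_minus_right: "scaleC c (- x::'a::complex_vector) = - scaleC c x"
  by (metis mult.commute scaleC_minus1_left scaleC_scaleC)

lemma scaleC_diff_right: "scaleC c (x - y::'a::complex_vector) = scaleC c x - scaleC c y"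
  by (metis diff_conv_add_uminus scaleC_add_right scaleC_minus_right)

lemma cinner_add_right: "cinner (x::'a::complex_inner) (y + z) = cinner x y + cinner x z"
  by (metis cinner_add_left cinner_commute complex_cnj_add)

lemma cinner_scaleC_right: "cinner (x::'a::complex_inner) (scaleC c y) = c * cinner x y"
  by (metis cinner_commute cinner_scaleC_left complex_cnj_cnj complex_cnj_mult)

lemma cinner_zero_left [simp]: "cinner 0 (x::'a::complex_inner) = 0"
  using cinner_add_left[of 0 0 x] by simp

lemma cinner_zero_right [simp]: "cinner (x::'a::complex_inner) 0 = 0"
  using cinner_add_right[of x 0 0] by simp

lemma cinner_diff_left: "cinner (x - z) (y::'a::complex_inner) = cinner x y - cinner z y"
  using cinner_add_left[of "x - z" z y] by simp

lemma cinner_diff_right: "cinner y (x - z::'a::complex_inner) = cinner y x - cinner y z"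
  using cinner_add_right[of y "x - z" z] by simp

lemma cinner_self_eq_norm_square: "cinner x (x::'a::complex_inner) = complex_of_real ((norm x)\<^sup>2)"
proof -
  have "Im (cinner x x) = - Im (cinner x x)"
    using arg_cong[OF cinner_commute[of x x], of Im] by simp
  moreover have "Re (cinner x x) = (norm x)\<^sup>2"
    using norm_eq_sqrt_cinner[of x] cinner_nonneg[of x] by simp
  ultimately show ?thesis by (simp add: complex_eq_iff)
qed

lemma norm_square_eq_Re_cinner: "(norm x)\<^sup>2 = Re (cinner x (x::'a::complex_inner))"
  by (simp add: cinner_self_eq_norm_square)

lemma cinner_eqI:
  fixes x y :: "'a::complex_inner"
  assumes "\<And>z. cinner z x = cinner z y"
  shows "x = y"
proof -
  have "cinner (x - y) (x - y) = 0" unfolding cinner_diff_right using assms by simp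
  thus ?thesis by (simp add: cinner_eq_zero_iff)
qed

text \<open>Pythagoras for \<open>x = (x - t y) + t y\<close>, where \<open>t y\<close> is the component of \<open>x\<close> along \<open>y\<close>.\<close>
lemma norm_diff_component_square:
  fixes x y :: "'a::complex_inner"
  assumes "y \<noteq> 0"
  shows "(norm (x - scaleC (cinner y x / complex_of_real ((norm y)\<^sup>2)) y))\<^sup>2
     = (norm x)\<^sup>2 - (cmod (cinner y x))\<^sup>2 / (norm y)\<^sup>2"
proof -
  define a where "a = cinner y x"
  define N where "N = (norm y)\<^sup>2"
  define t where "t = a / complex_of_real N"
  have N: "N > 0" using assms by (simp add: N_def)
  have cxy: "cinner x y = cnj a" unfolding a_def by (rule cinner_commute)
  have cyy: "cinner y y = complex_of_real N" unfolding N_def by (rule cinner_self_eq_norm_square)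
  have ct: "cnj t * complex_of_real N = cnj a" using N by (simp add: t_def)
  have "complex_of_real ((norm (x - scaleC t y))\<^sup>2) = cinner (x - scaleC t y) (x - scaleC t y)"
    by (simp only: cinner_self_eq_norm_square)
  also have "\<dots> = cinner x x - cnj t * a - t * (cnj a - cnj t * complex_of_real N)"
    unfolding cinner_diff_left cinner_diff_right cinner_scaleC_left cinner_scaleC_right cxy cyy a_def ..
  also have "\<dots> = cinner x x - a * cnj a / complex_of_real N"
    unfolding ct by (simp add: t_def)
  also have "\<dots> = complex_of_real ((norm x)\<^sup>2 - (cmod a)\<^sup>2 / N)"
    using complex_norm_square[of a] by (simp add: cinner_self_eq_norm_square)
  finally show ?thesis unfolding a_def N_def t_def using of_real_eq_iff by blast
qed

lemma cmod_cinner_le: "cmod (cinner x y) \<le> norm x * norm (y::'a::complex_inner)"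
proof (cases "x = 0")
  case True thus ?thesis by simp
next
  case False
  have "0 \<le> (norm y)\<^sup>2 - (cmod (cinner x y))\<^sup>2 / (norm x)\<^sup>2"
    unfolding norm_diff_component_square[OF False, of y, symmetric] by (rule zero_le_power2)
  moreover have "(norm x)\<^sup>2 > 0" using False by simp
  ultimately have "(cmod (cinner x y))\<^sup>2 \<le> (norm x * norm y)\<^sup>2"
    by (simp add: pos_divide_le_eq power_mult_distrib mult.commute)
  thus ?thesis by (rule power2_le_imp_le) simp
qed

lemma parallelogram_law:
  fixes a b :: "'a::complex_inner"
  shows "(norm (a + b))\<^sup>2 + (norm (a - b))\<^sup>2 = 2 * (norm a)\<^sup>2 + 2 * (norm b)\<^sup>2"
  unfolding norm_square_eq_Re_cinner cinner_add_left cinner_add_right cinner_diff_left cinner_diff_right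
  by simp

lemma bounded_bilinear_cinner: "bounded_bilinear (cinner :: 'a::complex_inner \<Rightarrow> 'a \<Rightarrow> complex)"
proof
  show "cinner (scaleR r a) b = scaleR r (cinner a b)" for r and a b :: 'a
    by (simp add: scaleR_scaleC cinner_scaleC_left scaleR_conv_of_real)
  show "cinner a (scaleR r b) = scaleR r (cinner a b)" for r and a b :: 'a
    by (simp add: scaleR_scaleC cinner_scaleC_right scaleR_conv_of_real)
  show "\<exists>K. \<forall>a b :: 'a. norm (cinner a b) \<le> norm a * norm b * K"
    by (intro exI[of _ 1]) (simp add: cmod_cinner_le)
qed (simp_all add: cinner_add_left cinner_add_right)

lemma bounded_linear_scaleC: "bounded_linear (\<lambda>x::'a::complex_normed_vector. scaleC c x)"
proof (rule bounded_linear_intro[where K = "cmod c"])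
  show "scaleC c (scaleR r x) = scaleR r (scaleC c x)" for r x
    by (simp add: scaleR_scaleC scaleC_scaleC mult.commute)
qed (simp_all add: scaleC_add_right norm_scaleC mult.commute)

lemmas continuous_on_cinner [continuous_intros] =
  bounded_bilinear.continuous_on[OF bounded_bilinear_cinner]
lemmas continuous_on_scaleC [continuous_intros] =
  bounded_linear.continuous_on[OF bounded_linear_scaleC]

lemma polarization_zero:
  fixes H :: "'x::complex_vector \<Rightarrow> 'x \<Rightarrow> complex"
  assumes add_left: "\<And>x y z. H (x + y) z = H x z + H y z"
    and add_right: "\<And>x y z. H x (y + z) = H x y + H x z"
    and scaleC_left: "\<And>c x y. H (scaleC c x) y = cnj c * H x y"
    and scaleC_right: "\<And>c x y. H x (scaleC c y) = c * H x y"
    and diagonal: "\<And>x. H x x = 0"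
  shows "H x y = 0"
proof -
  have "H (x + y) (x + y) = H x x + H x y + (H y x + H y y)" by (simp add: add_left add_right)
  hence sum: "H x y + H y x = 0" using diagonal by simp
  have "H (x + scaleC \<i> y) (x + scaleC \<i> y) = H x x + H y y + \<i> * (H x y - H y x)"
    by (simp add: add_left add_right scaleC_left scaleC_right algebra_simps)
  hence "H x y - H y x = 0" using diagonal by simp
  with sum show ?thesis by (simp add: algebra_simps)
qed

section \<open>Subspaces, closed spans and orthogonal projections\<close>

lemma csubspace_0: "csubspace M \<Longrightarrow> 0 \<in> M"
  by (simp add: csubspace_def)

lemma csubspace_add: "csubspace M \<Longrightarrow> x \<in> M \<Longrightarrow> y \<in> M \<Longrightarrow> x + y \<in> M"
  by (simp add: csubspace_def)

lemma csubspace_scaleC: "csubspace M \<Longrightarrow> x \<in> M \<Longrightarrow> scaleC c x \<in> M"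
  by (simp add: csubspace_def)

lemma csubspace_diff: "csubspace M \<Longrightarrow> x \<in> M \<Longrightarrow> y \<in> M \<Longrightarrow> x - y \<in> M"
  using csubspace_add[of M x "scaleC (-1) y"] csubspace_scaleC[of M y "-1"]
  by (simp add: scaleC_minus1_left)

lemma csubspace_scaleR: "csubspace M \<Longrightarrow> x \<in> M \<Longrightarrow> scaleR r x \<in> M"
  by (simp add: csubspace_scaleC scaleR_scaleC)

lemma csubspace_ccspan: "csubspace (ccspan S)"
  unfolding ccspan_def csubspace_def by auto

lemma closed_ccspan: "closed (ccspan S)"
  unfolding ccspan_def by (rule closed_Inter) auto

lemma ccspan_superset: "S \<subseteq> ccspan S"
  unfolding ccspan_def by auto

lemma ccspan_least: "csubspace M \<Longrightarrow> closed M \<Longrightarrow> S \<subseteq> M \<Longrightarrow> ccspan S \<subseteq> M"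
  unfolding ccspan_def by auto

text \<open>Along a minimizing sequence for the distance from \<open>x\<close> to \<open>M\<close>, the parallelogram law
  applied to \<open>x - f n\<close> and \<open>x - f k\<close> bounds \<open>\<parallel>f k - f n\<parallel>\<^sup>2\<close>, since their midpoint lies in \<open>M\<close>.\<close>
lemma minimizing_sequence_Cauchy:
  fixes x :: "'a::complex_inner"
  assumes sub: "csubspace M" and fM: "\<And>n. f n \<in> M" and d0: "0 \<le> d"
    and dle: "\<And>m. m \<in> M \<Longrightarrow> d \<le> norm (x - m)"
    and fd: "\<And>n. norm (x - f n) < d + inverse (real (Suc n))"
  shows "Cauchy f"
proof -
  have bound: "(norm (f k - f n))\<^sup>2 \<le> 4 * (2 * d + 1) * inverse (real (Suc N))"
    if "n \<ge> N" "k \<ge> N" for n k N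
  proof -
    define e where "e = inverse (real (Suc N))"
    have e: "0 < e" "e \<le> 1" "inverse (real (Suc n)) \<le> e" "inverse (real (Suc k)) \<le> e"
      using that by (auto simp: e_def inverse_le_1_iff intro!: le_imp_inverse_le)
    define a where "a = x - f n"
    define b where "b = x - f k"
    have "scaleR (1/2) (f n + f k) \<in> M"
      using fM by (intro csubspace_scaleR[OF sub] csubspace_add[OF sub])
    moreover have "a + b = scaleR 2 (x - scaleR (1/2) (f n + f k))"
      unfolding a_def b_def by (simp add: algebra_simps scaleR_2)
    ultimately have "2 * d \<le> norm (a + b)" using dle by simp
    hence ab: "(2 * d)\<^sup>2 \<le> (norm (a + b))\<^sup>2" by (rule power_mono) (use d0 in simp)
    have "norm a \<le> d + e" "norm b \<le> d + e" using fd[of n] fd[of k] e unfolding a_def b_def by linarith+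
    hence "(norm a)\<^sup>2 \<le> (d + e)\<^sup>2" "(norm b)\<^sup>2 \<le> (d + e)\<^sup>2" by (simp_all add: power_mono)
    moreover have "(norm (f k - f n))\<^sup>2 = 2 * (norm a)\<^sup>2 + 2 * (norm b)\<^sup>2 - (norm (a + b))\<^sup>2"
      using parallelogram_law[of a b] unfolding a_def b_def by simp
    ultimately have "(norm (f k - f n))\<^sup>2 \<le> 4 * (2 * d * e + e * e)"
      using ab by (simp add: power2_eq_square algebra_simps)
    also have "\<dots> \<le> 4 * (2 * d + 1) * e" using e by (simp add: mult_left_le algebra_simps)
    finally show ?thesis unfolding e_def .
  qed
  show ?thesis
  proof (rule CauchyI)
    fix \<epsilon> :: real assume \<epsilon>: "0 < \<epsilon>"
    obtain N where N: "4 * (2 * d + 1) / \<epsilon>\<^sup>2 < real N" using reals_Archimedean2 by blast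
    have "4 * (2 * d + 1) < real N * \<epsilon>\<^sup>2" using N \<epsilon> by (simp add: divide_less_eq)
    also have "\<dots> \<le> real (Suc N) * \<epsilon>\<^sup>2" by (simp add: mult_right_mono)
    finally have "4 * (2 * d + 1) * inverse (real (Suc N)) < \<epsilon>\<^sup>2" by (simp add: field_simps)
    hence "\<forall>m\<ge>N. \<forall>n\<ge>N. norm (f m - f n) < \<epsilon>"
      using bound \<epsilon> by (meson le_less_trans power2_less_imp_less less_imp_le)
    thus "\<exists>M. \<forall>m\<ge>M. \<forall>n\<ge>M. norm (f m - f n) < \<epsilon>" by blast
  qed
qed

lemma nearest_point_exists:
  fixes x :: "'a::chilbert_space"
  assumes sub: "csubspace M" and cl: "closed M"
  shows "\<exists>p\<in>M. \<forall>m\<in>M. norm (x - p) \<le> norm (x - m)"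
proof -
  define d where "d = (INF m\<in>M. norm (x - m))"
  have bdd: "bdd_below ((\<lambda>m. norm (x - m)) ` M)" by (rule bdd_belowI[of _ 0]) auto
  have dle: "d \<le> norm (x - m)" if "m \<in> M" for m
    unfolding d_def using bdd that by (rule cINF_lower)
  have d0: "0 \<le> d" unfolding d_def by (rule cINF_greatest) (use csubspace_0[OF sub] in auto)
  have "\<exists>m\<in>M. norm (x - m) < d + inverse (real (Suc n))" for n
  proof -
    have "d < d + inverse (real (Suc n))" by simp
    thus ?thesis using cINF_less_iff[OF _ bdd] csubspace_0[OF sub] unfolding d_def by blast
  qed
  then obtain f where fM: "\<And>n. f n \<in> M" and fd: "\<And>n. norm (x - f n) < d + inverse (real (Suc n))"
    by metis
  obtain p where p: "f \<longlonglongrightarrow> p"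
    using minimizing_sequence_Cauchy[OF sub fM d0 dle fd] Cauchy_convergent_iff convergent_def by blast
  have "p \<in> M" using cl fM p closed_sequential_limits by blast
  moreover have "norm (x - p) \<le> d"
  proof (rule LIMSEQ_le)
    show "(\<lambda>n. norm (x - f n)) \<longlonglongrightarrow> norm (x - p)" by (intro tendsto_intros p)
    show "(\<lambda>n. d + inverse (real (Suc n))) \<longlonglongrightarrow> d"
      using tendsto_add[OF tendsto_const LIMSEQ_inverse_real_of_nat, of d] by simp
    show "\<exists>N. \<forall>n\<ge>N. norm (x - f n) \<le> d + inverse (real (Suc n))" using fd less_imp_le by blast
  qed
  ultimately show ?thesis using dle by force
qed

lemma nearest_point_orthogonal:
  fixes x :: "'a::complex_inner"
  assumes sub: "csubspace M" and pM: "p \<in> M" and nearest: "\<And>m. m \<in> M \<Longrightarrow> norm (x - p) \<le> norm (x - m)"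
    and mM: "m \<in> M"
  shows "cinner m (x - p) = 0"
proof (cases "m = 0")
  case True thus ?thesis by simp
next
  case False
  define t where "t = cinner m (x - p) / complex_of_real ((norm m)\<^sup>2)"
  have "p + scaleC t m \<in> M" using pM mM sub by (simp add: csubspace_add csubspace_scaleC)
  hence "norm (x - p) \<le> norm ((x - p) - scaleC t m)" using nearest by (simp add: algebra_simps)
  hence "(norm (x - p))\<^sup>2 \<le> (norm ((x - p) - scaleC t m))\<^sup>2" by (simp add: power_mono)
  also have "\<dots> = (norm (x - p))\<^sup>2 - (cmod (cinner m (x - p)))\<^sup>2 / (norm m)\<^sup>2"
    unfolding t_def by (rule norm_diff_component_square[OF False])
  finally have "(cmod (cinner m (x - p)))\<^sup>2 / (norm m)\<^sup>2 \<le> 0" by simp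
  moreover have "(norm m)\<^sup>2 > 0" using False by simp
  ultimately show ?thesis by (simp add: divide_le_0_iff)
qed

lemma orthogonal_decomposition_unique:
  assumes "csubspace M"
    and "p \<in> M" "\<forall>m\<in>M. cinner m (x - p) = 0"
    and "q \<in> M" "\<forall>m\<in>M. cinner m (x - q) = 0"
  shows "p = q"
proof -
  have "p - q \<in> M" using assms by (simp add: csubspace_diff)
  hence "cinner (p - q) (x - q) - cinner (p - q) (x - p) = 0" using assms by simp
  hence "cinner (p - q) (p - q) = 0" unfolding cinner_diff_right by simp
  thus ?thesis by (simp add: cinner_eq_zero_iff)
qed

lemma proj_characterization:
  fixes x :: "'a::chilbert_space"
  assumes sub: "csubspace M" and cl: "closed M"
  shows "proj M x \<in> M \<and> (\<forall>m\<in>M. cinner m (x - proj M x) = 0)"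
proof -
  have "\<forall>x. \<exists>p. p \<in> M \<and> (\<forall>m\<in>M. cinner m (x - p) = 0)"
    using nearest_point_exists[OF sub cl] nearest_point_orthogonal[OF sub] by meson
  then obtain P where P: "\<forall>x. P x \<in> M \<and> (\<forall>m\<in>M. cinner m (x - P x) = 0)" by metis
  have "\<exists>!P. \<forall>x. P x \<in> M \<and> (\<forall>m\<in>M. cinner m (x - P x) = 0)"
    by (rule ex1I[of _ P]) (use P orthogonal_decomposition_unique[OF sub] in blast)+
  thus ?thesis unfolding proj_def by (rule theI'[THEN spec])
qed

lemma proj_in: "csubspace M \<Longrightarrow> closed M \<Longrightarrow> proj M x \<in> M"
  using proj_characterization by blast

lemma proj_orthogonal: "csubspace M \<Longrightarrow> closed M \<Longrightarrow> m \<in> M \<Longrightarrow> cinner m (x - proj M x) = 0"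
  using proj_characterization by blast

lemma proj_eqI:
  assumes "csubspace M" "closed M" "p \<in> M" "\<forall>m\<in>M. cinner m (x - p) = 0"
  shows "proj M x = p"
  using orthogonal_decomposition_unique[OF assms(1)] proj_characterization[OF assms(1,2)] assms(3,4)
  by blast

lemma proj_fixes: "csubspace M \<Longrightarrow> closed M \<Longrightarrow> m \<in> M \<Longrightarrow> proj M m = m"
  by (rule proj_eqI) simp_all

lemma proj_add:
  assumes "csubspace M" "closed M"
  shows "proj M (x + y) = proj M x + proj M y"
proof (rule proj_eqI[OF assms])
  show "proj M x + proj M y \<in> M" using assms by (simp add: proj_in csubspace_add)
  have "x + y - (proj M x + proj M y) = (x - proj M x) + (y - proj M y)" by simp
  thus "\<forall>m\<in>M. cinner m (x + y - (proj M x + proj M y)) = 0"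
    using proj_orthogonal[OF assms] by (simp only: cinner_add_right) simp
qed

lemma proj_scaleC:
  assumes "csubspace M" "closed M"
  shows "proj M (scaleC c x) = scaleC c (proj M x)"
proof (rule proj_eqI[OF assms])
  show "scaleC c (proj M x) \<in> M" using assms by (simp add: proj_in csubspace_scaleC)
  show "\<forall>m\<in>M. cinner m (scaleC c x - scaleC c (proj M x)) = 0"
    using proj_orthogonal[OF assms]
    by (simp add: scaleC_diff_right[symmetric] cinner_scaleC_right)
qed

lemma norm_proj_le:
  assumes "csubspace M" "closed M"
  shows "norm (proj M x) \<le> norm x"
proof -
  define p where "p = proj M x"
  have o: "cinner p (x - p) = 0" unfolding p_def using assms by (simp add: proj_in proj_orthogonal)
  hence o': "cinner (x - p) p = 0" using cinner_commute[of "x - p" p] by simp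
  have "(norm x)\<^sup>2 = Re (cinner (p + (x - p)) (p + (x - p)))" by (simp add: norm_square_eq_Re_cinner)
  also have "\<dots> = (norm p)\<^sup>2 + (norm (x - p))\<^sup>2"
    unfolding cinner_add_left cinner_add_right o o' by (simp add: norm_square_eq_Re_cinner)
  finally have "(norm p)\<^sup>2 \<le> (norm x)\<^sup>2" by simp
  thus ?thesis unfolding p_def by (rule power2_le_imp_le) simp
qed

section \<open>Bounded operators and adjoints\<close>

lemma bclinear_add: "bclinear T \<Longrightarrow> T (x + y) = T x + T y"
  by (simp add: bclinear_def)

lemma bclinear_scaleC: "bclinear T \<Longrightarrow> T (scaleC c x) = scaleC c (T x)"
  by (simp add: bclinear_def)

text \<open>The representing vector is a multiple of a vector \<open>u \<noteq> 0\<close> orthogonal to \<open>ker f\<close>.\<close>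
lemma riesz_representation:
  fixes f :: "'a::chilbert_space \<Rightarrow> complex"
  assumes add: "\<And>x y. f (x + y) = f x + f y" and scale: "\<And>c x. f (scaleC c x) = c * f x"
    and bounded: "\<And>x. norm (f x) \<le> norm x * K"
  shows "\<exists>w. \<forall>x. f x = cinner w x"
proof (cases "\<forall>x. f x = 0")
  case True thus ?thesis by (intro exI[of _ 0]) simp
next
  case False
  then obtain x0 where x0: "f x0 \<noteq> 0" by blast
  have bl: "bounded_linear f"
    by (rule bounded_linear_intro[OF add _ bounded]) (simp add: scaleR_scaleC scale scaleR_conv_of_real)
  have f_diff: "f (a - b) = f a - f b" for a b using bl by (simp add: linear_simps)
  define N where "N = {x. f x = 0}"
  have subN: "csubspace N" unfolding N_def csubspace_def using add scale bl by (simp add: linear_simps)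
  have clN: "closed N" unfolding N_def
    by (rule closed_Collect_eq) (auto intro: linear_continuous_on bl)
  define u where "u = x0 - proj N x0"
  have fu: "f u \<noteq> 0" using x0 proj_in[OF subN clN] unfolding u_def N_def by (simp add: f_diff)
  have orth: "cinner m u = 0" if "m \<in> N" for m
    unfolding u_def using proj_orthogonal[OF subN clN that] .
  define nu where "nu = complex_of_real ((norm u)\<^sup>2)"
  have nu0: "nu \<noteq> 0" using fu bl unfolding nu_def by (metis linear_simps(3) of_real_eq_0_iff zero_eq_power2 norm_eq_zero)
  have "f x = cinner (scaleC (cnj (f u) / nu) u) x" for x
  proof -
    have "f (x - scaleC (f x / f u) u) = 0" using fu by (simp add: f_diff scale)
    hence "cinner (x - scaleC (f x / f u) u) u = 0" using orth unfolding N_def by simp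
    hence "cinner x u = cnj (f x / f u) * nu"
      unfolding cinner_diff_left cinner_scaleC_left nu_def cinner_self_eq_norm_square[symmetric] by simp
    hence "cinner u x = (f x / f u) * nu" by (simp add: cinner_commute[of u x] nu_def)
    thus ?thesis using fu nu0 by (simp add: cinner_scaleC_left nu_def field_simps)
  qed
  thus ?thesis by blast
qed

lemma adj_cinner:
  fixes T :: "'h::chilbert_space \<Rightarrow> 'k::chilbert_space"
  assumes "bclinear T"
  shows "cinner (T x) y = cinner x (adj T y)"
proof -
  obtain C where C: "\<And>x. norm (T x) \<le> C * norm x" using assms unfolding bclinear_def by blast
  have "\<exists>w. \<forall>x. cinner (T x) y = cinner x w" for y
  proof -
    have "\<exists>w. \<forall>x. cinner y (T x) = cinner w x"
    proof (rule riesz_representation)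
      show "norm (cinner y (T x)) \<le> norm x * (norm y * C)" for x
      proof -
        have "norm (cinner y (T x)) \<le> norm y * norm (T x)" by (rule cmod_cinner_le)
        also have "\<dots> \<le> norm y * (C * norm x)" using C by (simp add: mult_left_mono)
        finally show ?thesis by (simp add: ac_simps)
      qed
    qed (simp_all add: bclinear_add[OF assms] bclinear_scaleC[OF assms] cinner_add_right cinner_scaleC_right)
    thus ?thesis by (metis cinner_commute)
  qed
  hence "\<exists>S. \<forall>x y. cinner (T x) y = cinner x (S y)" by metis
  hence "\<forall>x y. cinner (T x) y = cinner x (adj T y)" unfolding adj_def by (rule someI_ex)
  thus ?thesis by blast
qed

lemma adj_eqI:
  assumes S: "\<And>x y. cinner (T x) y = cinner x (S y)"
  shows "adj T = S"
proof -
  have "\<forall>x y. cinner (T x) y = cinner x (adj T y)"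
    unfolding adj_def by (rule someI[of _ S]) (simp add: S)
  thus ?thesis using S by (intro ext cinner_eqI) simp
qed

section \<open>Isometric linear relations\<close>

lemma closure_Times_subset: "closed R \<Longrightarrow> A \<times> B \<subseteq> R \<Longrightarrow> closure A \<times> closure B \<subseteq> R"
  by (metis closure_Times closure_minimal)

definition isometric_relation :: "('a::complex_inner \<times> 'a) set \<Rightarrow> bool" where
  "isometric_relation G \<longleftrightarrow> (0, 0) \<in> G \<and>
     (\<forall>a b a' b'. (a, b) \<in> G \<longrightarrow> (a', b') \<in> G \<longrightarrow> (a + a', b + b') \<in> G) \<and>
     (\<forall>c a b. (a, b) \<in> G \<longrightarrow> (scaleC c a, scaleC c b) \<in> G) \<and>
     (\<forall>a b a' b'. (a, b) \<in> G \<longrightarrow> (a', b') \<in> G \<longrightarrow> cinner b b' = cinner a a')"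

context
  fixes G :: "('a::complex_inner \<times> 'a) set"
  assumes G: "isometric_relation G"
begin

lemma isometric_relation_zero: "(0, 0) \<in> G"
  using G by (simp add: isometric_relation_def)

lemma isometric_relation_add: "(a, b) \<in> G \<Longrightarrow> (a', b') \<in> G \<Longrightarrow> (a + a', b + b') \<in> G"
  using G by (simp add: isometric_relation_def)

lemma isometric_relation_scaleC: "(a, b) \<in> G \<Longrightarrow> (scaleC c a, scaleC c b) \<in> G"
  using G by (simp add: isometric_relation_def)

lemma isometric_relation_cinner: "(a, b) \<in> G \<Longrightarrow> (a', b') \<in> G \<Longrightarrow> cinner b b' = cinner a a'"
  using G unfolding isometric_relation_def by blast

lemma isometric_relation_diff:
  assumes "(a, b) \<in> G" "(a', b') \<in> G"
  shows "(a - a', b - b') \<in> G"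
proof -
  have "(scaleC (-1) a', scaleC (-1) b') \<in> G" by (rule isometric_relation_scaleC[OF assms(2)])
  from isometric_relation_add[OF assms(1) this] show ?thesis by (simp add: scaleC_minus1_left)
qed

lemma isometric_relation_norm:
  assumes "(a, b) \<in> G"
  shows "norm b = norm a"
proof -
  have "complex_of_real ((norm b)\<^sup>2) = complex_of_real ((norm a)\<^sup>2)"
    using isometric_relation_cinner[OF assms assms] by (simp only: cinner_self_eq_norm_square)
  thus ?thesis by (simp only: of_real_eq_iff power2_eq_iff_nonneg norm_ge_zero)
qed

lemma isometric_relation_functional: "(a, b) \<in> G \<Longrightarrow> (a, b') \<in> G \<Longrightarrow> b = b'"
  using isometric_relation_norm[OF isometric_relation_diff, of a b a b'] by simp

lemma isometric_relation_injective: "(a, b) \<in> G \<Longrightarrow> (a', b) \<in> G \<Longrightarrow> a = a'"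
  using isometric_relation_norm[OF isometric_relation_diff, of a b a' b] by simp

lemma isometric_relation_swap: "isometric_relation (prod.swap ` G)"
  unfolding isometric_relation_def
proof (intro conjI allI impI)
  show "(0, 0) \<in> prod.swap ` G" using isometric_relation_zero by force
  fix a b a' b' assume "(a, b) \<in> prod.swap ` G" "(a', b') \<in> prod.swap ` G"
  hence ba: "(b, a) \<in> G" "(b', a') \<in> G" by auto
  show "(a + a', b + b') \<in> prod.swap ` G" using isometric_relation_add[OF ba] by force
  show "cinner b b' = cinner a a'" using isometric_relation_cinner[OF ba] by simp
next
  fix c a b assume "(a, b) \<in> prod.swap ` G"
  hence "(b, a) \<in> G" by auto
  thus "(scaleC c a, scaleC c b) \<in> prod.swap ` G" using isometric_relation_scaleC by force
qed

lemma csubspace_isometric_relation_domain: "csubspace (fst ` G)"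
  unfolding csubspace_def
proof (intro conjI ballI allI)
  show "0 \<in> fst ` G" using isometric_relation_zero by force
  fix x y assume "x \<in> fst ` G" "y \<in> fst ` G"
  then obtain b b' where "(x, b) \<in> G" "(y, b') \<in> G" by force
  thus "x + y \<in> fst ` G" using isometric_relation_add by force
next
  fix c x assume "x \<in> fst ` G"
  then obtain b where "(x, b) \<in> G" by force
  thus "scaleC c x \<in> fst ` G" using isometric_relation_scaleC by force
qed

lemma isometric_relation_closure: "isometric_relation (closure G)"
  unfolding isometric_relation_def
proof (intro conjI allI impI)
  have add: "closure G \<times> closure G \<subseteq> (\<lambda>z. fst z + snd z) -` closure G"
  proof (rule closure_Times_subset)
    show "closed ((\<lambda>z. fst z + snd z) -` closure G)"
      by (intro closed_vimage closed_closure) (auto intro!: continuous_intros)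
    have "(a + a', b + b') \<in> closure G" if "(a, b) \<in> G" "(a', b') \<in> G" for a b a' b'
      using isometric_relation_add[OF that] closure_subset by blast
    thus "G \<times> G \<subseteq> (\<lambda>z. fst z + snd z) -` closure G" by auto
  qed
  have cinner: "closure G \<times> closure G \<subseteq>
      {z. cinner (snd (fst z)) (snd (snd z)) = cinner (fst (fst z)) (fst (snd z))}"
  proof (rule closure_Times_subset)
    show "closed {z. cinner (snd (fst z)) (snd (snd z)) = cinner (fst (fst z)) (fst (snd z))}"
      by (intro closed_Collect_eq) (auto intro!: continuous_intros)
    show "G \<times> G \<subseteq> {z. cinner (snd (fst z)) (snd (snd z)) = cinner (fst (fst z)) (fst (snd z))}"
      using isometric_relation_cinner by auto
  qed
  show "(0, 0) \<in> closure G" using isometric_relation_zero closure_subset by blast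
  fix a b a' b' assume "(a, b) \<in> closure G" "(a', b') \<in> closure G"
  hence ab: "((a, b), (a', b')) \<in> closure G \<times> closure G" by simp
  show "(a + a', b + b') \<in> closure G" using subsetD[OF add ab] by simp
  show "cinner b b' = cinner a a'" using subsetD[OF cinner ab] by simp
next
  fix c a b assume "(a, b) \<in> closure G"
  moreover have "(\<lambda>q. (scaleC c (fst q), scaleC c (snd q))) ` closure G \<subseteq> closure G"
  proof (rule image_closure_subset)
    show "continuous_on (closure G) (\<lambda>q::'a \<times> 'a. (scaleC c (fst q), scaleC c (snd q)))"
      by (auto intro!: continuous_intros)
    show "(\<lambda>q. (scaleC c (fst q), scaleC c (snd q))) ` G \<subseteq> closure G"
      using isometric_relation_scaleC closure_subset[of G] by auto
  qed simp
  ultimately show "(scaleC c a, scaleC c b) \<in> closure G" by force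
qed

end

text \<open>Completeness enters here: a convergent sequence in the domain has a Cauchy, hence
  convergent, sequence of images.\<close>
lemma closed_isometric_relation_domain:
  fixes G :: "('a::chilbert_space \<times> 'a) set"
  assumes G: "isometric_relation G" and cl: "closed G"
  shows "closed (fst ` G)"
  unfolding closed_sequential_limits
proof (intro allI impI, elim conjE)
  fix y l assume yG: "\<forall>n. y n \<in> fst ` G" and yl: "y \<longlonglongrightarrow> l"
  have "\<exists>b. (y n, b) \<in> G" for n
  proof -
    obtain p where "p \<in> G" "y n = fst p" using yG by blast
    thus ?thesis by (intro exI[of _ "snd p"]) simp
  qed
  then obtain b where b: "\<And>n. (y n, b n) \<in> G" by metis
  have "norm (b m - b n) = norm (y m - y n)" for m n
    using isometric_relation_norm[OF G isometric_relation_diff[OF G b b]] .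
  hence "Cauchy b" using LIMSEQ_imp_Cauchy[OF yl] unfolding Cauchy_iff by presburger
  then obtain l' where "b \<longlonglongrightarrow> l'" using Cauchy_convergent_iff convergent_def by blast
  hence "(\<lambda>n. (y n, b n)) \<longlonglongrightarrow> (l, l')" by (rule tendsto_Pair[OF yl])
  hence "(l, l') \<in> G" using closed_sequentially[OF cl, of "\<lambda>n. (y n, b n)"] b by simp
  thus "l \<in> fst ` G" by (rule image_eqI[rotated]) simp
qed

lemma closure_swap: "closure (prod.swap ` G) = prod.swap ` closure (G::('a::topological_space \<times> 'b::topological_space) set)"
  by (rule closure_bij_homeomorphic_image_eq[where A = UNIV and B = UNIV and A' = UNIV and B' = UNIV and g = prod.swap])
    (auto simp: homeomorphism_def continuous_on_swap bij_swap)

lemma ccspan_domain_subset_closure: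
  fixes G :: "('a::chilbert_space \<times> 'a) set"
  assumes "isometric_relation G"
  shows "ccspan (fst ` G) \<subseteq> fst ` closure G"
  using ccspan_least[OF csubspace_isometric_relation_domain
      closed_isometric_relation_domain[OF _ closed_closure]]
    isometric_relation_closure[OF assms] closure_subset
  by blast

lemma ccspan_range_subset_closure:
  fixes G :: "('a::chilbert_space \<times> 'a) set"
  assumes "isometric_relation G"
  shows "ccspan (snd ` G) \<subseteq> snd ` closure G"
proof -
  have "ccspan (fst ` prod.swap ` G) \<subseteq> fst ` closure (prod.swap ` G)"
    by (rule ccspan_domain_subset_closure[OF isometric_relation_swap[OF assms]])
  moreover have "fst ` prod.swap ` A = snd ` A" for A :: "('a \<times> 'a) set"
    by (force simp: image_iff)
  ultimately show ?thesis by (simp add: closure_swap)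
qed

text \<open>Precomposing with \<open>proj M\<close> extends the graph over \<open>M\<close> by zero on \<open>M\<^sup>\<bottom>\<close>.\<close>
lemma closed_isometric_relation_operator:
  fixes G :: "('a::chilbert_space \<times> 'a) set"
  assumes G: "isometric_relation G" and cl: "closed G"
    and M: "csubspace M" "closed M" and dom: "M \<subseteq> fst ` G"
  obtains V where "bclinear V" "\<And>y. (proj M y, V y) \<in> G"
proof
  define V where "V y = (SOME b. (proj M y, b) \<in> G)" for y
  show graph: "(proj M y, V y) \<in> G" for y
  proof -
    have "proj M y \<in> fst ` G" using dom proj_in[OF M] by blast
    then obtain b where "(proj M y, b) \<in> G" by force
    thus ?thesis unfolding V_def by (rule someI)
  qed
  have "(proj M (y + y'), V y + V y') \<in> G" for y y'
    using isometric_relation_add[OF G graph graph] by (simp add: proj_add[OF M])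
  hence "V (y + y') = V y + V y'" for y y'
    using isometric_relation_functional[OF G graph] by blast
  moreover have "(proj M (scaleC c y), scaleC c (V y)) \<in> G" for c y
    using isometric_relation_scaleC[OF G graph] by (simp add: proj_scaleC[OF M])
  hence "V (scaleC c y) = scaleC c (V y)" for c y
    using isometric_relation_functional[OF G graph] by blast
  moreover have "norm (V y) \<le> 1 * norm y" for y
    using isometric_relation_norm[OF G graph] norm_proj_le[OF M] by simp
  ultimately show "bclinear V" unfolding bclinear_def by blast
qed

lemma partial_isometry_of_isometric_graph:
  fixes G :: "('a::chilbert_space \<times> 'a) set"
  assumes G: "isometric_relation G" "G \<subseteq> M2 \<times> M1"
    and M1: "csubspace M1" "closed M1" and M2: "csubspace M2" "closed M2"
    and V: "bclinear V" and VG: "\<And>y. (proj M2 y, V y) \<in> G"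
    and WG: "\<And>z. (W z, proj M1 z) \<in> G"
  shows "partial_isometry V" "V \<circ> adj V = proj M1" "adj V \<circ> V = proj M2"
proof -
  have VM: "V y \<in> M1" and WM: "W z \<in> M2" for y z using G(2) VG WG by blast+
  have "cinner (V y) z = cinner y (W z)" for y z
  proof -
    have "cinner (V y) z = cinner (V y) (proj M1 z)"
      using proj_orthogonal[OF M1 VM] by (simp add: cinner_diff_right)
    also have "\<dots> = cinner (proj M2 y) (W z)" by (rule isometric_relation_cinner[OF G(1) VG WG])
    also have "\<dots> = cinner y (W z)"
      using proj_orthogonal[OF M2 WM[of z], of y] cinner_commute[of "y - proj M2 y" "W z"]
      by (simp add: cinner_diff_left)
    finally show ?thesis .
  qed
  hence adjV: "adj V = W" by (rule adj_eqI)
  have VW: "V (W z) = proj M1 z" for z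
  proof -
    have "(W z, V (W z)) \<in> G" using VG[of "W z"] proj_fixes[OF M2 WM] by simp
    thus ?thesis using WG[of z] by (rule isometric_relation_functional[OF G(1)])
  qed
  have WV: "W (V y) = proj M2 y" for y
  proof -
    have "(W (V y), V y) \<in> G" using WG[of "V y"] proj_fixes[OF M1 VM] by simp
    thus ?thesis using VG[of y] by (rule isometric_relation_injective[OF G(1)])
  qed
  show "partial_isometry V"
    unfolding partial_isometry_def adjV using V by (simp add: fun_eq_iff VW proj_fixes[OF M1 VM])
  show "V \<circ> adj V = proj M1" "adj V \<circ> V = proj M2"
    unfolding adjV by (simp_all add: fun_eq_iff VW WV)
qed

text \<open>The closure of the graph is the graph of a unitary from \<open>ccspan (fst ` G)\<close> onto
  \<open>ccspan (snd ` G)\<close>; its inverse \<open>W\<close> is read off the swapped graph.\<close>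
lemma isometric_relation_partial_isometry:
  fixes G :: "('a::chilbert_space \<times> 'a) set"
  assumes G: "isometric_relation G"
  obtains V where "partial_isometry V"
    "V \<circ> adj V = proj (ccspan (snd ` G))" "adj V \<circ> V = proj (ccspan (fst ` G))"
    "\<And>a b. (a, b) \<in> G \<Longrightarrow> V a = b"
proof -
  define M1 where "M1 = ccspan (snd ` G)"
  define M2 where "M2 = ccspan (fst ` G)"
  define Gc where "Gc = closure G"
  have M1: "csubspace M1" "closed M1" and M2: "csubspace M2" "closed M2"
    unfolding M1_def M2_def by (simp_all add: csubspace_ccspan closed_ccspan)
  have Gc: "isometric_relation Gc" and Gc': "isometric_relation (prod.swap ` Gc)"
    unfolding Gc_def using isometric_relation_closure[OF G] isometric_relation_swap by blast+
  have "G \<subseteq> fst ` G \<times> snd ` G" by force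
  also have "\<dots> \<subseteq> M2 \<times> M1" unfolding M1_def M2_def by (intro Sigma_mono ccspan_superset)
  finally have GcM: "Gc \<subseteq> M2 \<times> M1"
    unfolding Gc_def using M1 M2 by (intro closure_minimal closed_Times)
  have dom: "M2 \<subseteq> fst ` Gc" "M1 \<subseteq> snd ` Gc"
    using ccspan_domain_subset_closure[OF G] ccspan_range_subset_closure[OF G]
    unfolding M1_def M2_def Gc_def by simp_all
  have "closed Gc" unfolding Gc_def by simp
  then obtain V where V: "bclinear V" and VG: "\<And>y. (proj M2 y, V y) \<in> Gc"
    using closed_isometric_relation_operator[OF Gc _ M2 dom(1)] by blast
  have "closed (prod.swap ` Gc)" unfolding Gc_def closure_swap[symmetric] by simp
  moreover have "M1 \<subseteq> fst ` prod.swap ` Gc" using dom(2) by (simp add: image_image)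
  ultimately obtain W where "\<And>z. (proj M1 z, W z) \<in> prod.swap ` Gc"
    using closed_isometric_relation_operator[OF Gc' _ M1] by blast
  hence WG: "(W z, proj M1 z) \<in> Gc" for z by force
  have "V a = b" if ab: "(a, b) \<in> G" for a b
  proof -
    have "a \<in> M2" using ab ccspan_superset unfolding M2_def by force
    hence "(a, V a) \<in> Gc" using VG[of a] proj_fixes[OF M2] by simp
    moreover have "(a, b) \<in> Gc" using ab closure_subset unfolding Gc_def by blast
    ultimately show ?thesis by (rule isometric_relation_functional[OF Gc])
  qed
  with partial_isometry_of_isometric_graph[OF Gc GcM M1 M2 V VG WG] show thesis
    using that unfolding M1_def M2_def by blast
qed

section \<open>Factorization through a partial isometry\<close>

definition sum_apply :: "('x \<Rightarrow> 'h \<Rightarrow> 'k::complex_vector) \<Rightarrow> ('x \<times> 'h) list \<Rightarrow> 'k" where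
  "sum_apply F l = (\<Sum>(x, h)\<leftarrow>l. F x h)"

lemma sum_apply_Nil [simp]: "sum_apply F [] = 0"
  by (simp add: sum_apply_def)

lemma sum_apply_Cons [simp]: "sum_apply F (p # l) = F (fst p) (snd p) + sum_apply F l"
  by (simp add: sum_apply_def split_beta)

lemma sum_apply_append: "sum_apply F (l1 @ l2) = sum_apply F l1 + sum_apply F l2"
  by (simp add: sum_apply_def)

lemma sum_apply_scaleC:
  assumes "\<And>x. bclinear (F x)"
  shows "sum_apply F (map (\<lambda>(x, h). (x, scaleC c h)) l) = scaleC c (sum_apply F l)"
  by (induction l) (auto simp: bclinear_scaleC[OF assms] scaleC_add_right)

lemma sum_apply_in_csubspace: "csubspace M \<Longrightarrow> (\<And>x h. F x h \<in> M) \<Longrightarrow> sum_apply F l \<in> M"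
  by (induction l) (auto intro: csubspace_add csubspace_0)

lemma ccspan_range_sum_apply: "ccspan (range (sum_apply F)) = ccspan {F x h | x h. True}"
proof (rule antisym)
  have "sum_apply F l \<in> ccspan {F x h | x h. True}" for l
    by (rule sum_apply_in_csubspace[OF csubspace_ccspan]) (use ccspan_superset[of "{F x h | x h. True}"] in blast)
  hence "range (sum_apply F) \<subseteq> ccspan {F x h | x h. True}" by blast
  thus "ccspan (range (sum_apply F)) \<subseteq> ccspan {F x h | x h. True}"
    by (rule ccspan_least[OF csubspace_ccspan closed_ccspan])
  have "F x h = sum_apply F [(x, h)]" for x h by simp
  hence "{F x h | x h. True} \<subseteq> ccspan (range (sum_apply F))"
    using ccspan_superset[of "range (sum_apply F)"] by blast
  thus "ccspan {F x h | x h. True} \<subseteq> ccspan (range (sum_apply F))"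
    by (rule ccspan_least[OF csubspace_ccspan closed_ccspan])
qed

lemma cinner_sum_apply:
  assumes "\<And>x y h k. cinner (\<Phi> x h) (\<Phi> y k) = cinner (\<Psi> x h) (\<Psi> y k)"
  shows "cinner (sum_apply \<Phi> l) (sum_apply \<Phi> l') = cinner (sum_apply \<Psi> l) (sum_apply \<Psi> l')"
proof -
  have "cinner (\<Phi> x h) (sum_apply \<Phi> l') = cinner (\<Psi> x h) (sum_apply \<Psi> l')" for x h
    by (induction l') (simp_all add: cinner_add_right assms)
  thus ?thesis by (induction l) (simp_all add: cinner_add_left)
qed

lemma factorization_of_cinner_eq:
  fixes \<Phi> \<Psi> :: "'x \<Rightarrow> 'h::chilbert_space \<Rightarrow> 'k::chilbert_space"
  assumes lin: "\<And>x. bclinear (\<Phi> x)" "\<And>x. bclinear (\<Psi> x)"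
    and eq: "\<And>x y h k. cinner (\<Phi> x h) (\<Phi> y k) = cinner (\<Psi> x h) (\<Psi> y k)"
  shows "\<exists>V. partial_isometry V \<and>
         V \<circ> adj V = proj (ccspan {\<Phi> x h | x h. True}) \<and>
         adj V \<circ> V = proj (ccspan {\<Psi> x h | x h. True}) \<and>
         (\<forall>x. \<Phi> x = V \<circ> \<Psi> x)"
proof -
  define G where "G = range (\<lambda>l. (sum_apply \<Psi> l, sum_apply \<Phi> l))"
  have "isometric_relation G" unfolding isometric_relation_def
  proof (intro conjI allI impI)
    show "(0, 0) \<in> G" unfolding G_def by (rule range_eqI[of _ _ "[]"]) simp
    fix a b a' b' assume "(a, b) \<in> G" "(a', b') \<in> G"
    then obtain l l' where l: "a = sum_apply \<Psi> l" "b = sum_apply \<Phi> l"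
      and l': "a' = sum_apply \<Psi> l'" "b' = sum_apply \<Phi> l'"
      unfolding G_def by blast
    show "(a + a', b + b') \<in> G"
      unfolding G_def l l' by (rule range_eqI[of _ _ "l @ l'"]) (simp add: sum_apply_append)
    show "cinner b b' = cinner a a'" unfolding l l' by (rule cinner_sum_apply[OF eq])
  next
    fix c a b assume "(a, b) \<in> G"
    then obtain l where "a = sum_apply \<Psi> l" "b = sum_apply \<Phi> l" unfolding G_def by blast
    thus "(scaleC c a, scaleC c b) \<in> G" unfolding G_def
      by (intro range_eqI[of _ _ "map (\<lambda>(x, h). (x, scaleC c h)) l"]) (simp add: sum_apply_scaleC lin)
  qed
  then obtain V where V: "partial_isometry V"
    "V \<circ> adj V = proj (ccspan (snd ` G))" "adj V \<circ> V = proj (ccspan (fst ` G))"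
    and V_sum: "\<And>l. V (sum_apply \<Psi> l) = sum_apply \<Phi> l"
    by (rule isometric_relation_partial_isometry) (auto simp: G_def)
  have "snd ` G = range (sum_apply \<Phi>)" "fst ` G = range (sum_apply \<Psi>)"
    unfolding G_def by (simp_all add: image_image)
  hence "V \<circ> adj V = proj (ccspan {\<Phi> x h | x h. True})"
    "adj V \<circ> V = proj (ccspan {\<Psi> x h | x h. True})"
    using V(2,3) by (simp_all add: ccspan_range_sum_apply)
  moreover have "\<forall>x. \<Phi> x = V \<circ> \<Psi> x"
    using V_sum[of "[(x, h)]" for x h] by (simp add: fun_eq_iff)
  ultimately show ?thesis using V(1) by blast
qed

lemma cp_equiv_of_factorization:
  fixes \<Phi> \<Psi> :: "'x \<Rightarrow> 'h::chilbert_space \<Rightarrow> 'k::chilbert_space"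
  assumes lin: "\<And>x. bclinear (\<Phi> x)" "\<And>x. bclinear (\<Psi> x)"
    and V: "partial_isometry V" and VV: "adj V \<circ> V = proj (ccspan {\<Psi> x h | x h. True})"
    and factor: "\<And>x. \<Phi> x = V \<circ> \<Psi> x"
  shows "cp_equiv \<Phi> \<Psi>"
  unfolding cp_equiv_def
proof (intro allI ext cinner_eqI)
  fix x k h
  have "\<Psi> x k \<in> ccspan {\<Psi> x h | x h. True}" using ccspan_superset[of "{\<Psi> x h | x h. True}"] by blast
  hence adjVV: "adj V (V (\<Psi> x k)) = \<Psi> x k"
    using fun_cong[OF VV, of "\<Psi> x k"] proj_fixes[OF csubspace_ccspan closed_ccspan] by simp
  have "cinner h ((adj (\<Phi> x) \<circ> \<Phi> x) k) = cinner (\<Phi> x h) (\<Phi> x k)"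
    by (simp add: adj_cinner[OF lin(1)])
  also have "\<dots> = cinner (V (\<Psi> x h)) (V (\<Psi> x k))" by (simp add: factor)
  also have "\<dots> = cinner (\<Psi> x h) (\<Psi> x k)"
    using V adjVV unfolding partial_isometry_def by (simp add: adj_cinner[of V])
  also have "\<dots> = cinner h ((adj (\<Psi> x) \<circ> \<Psi> x) k)"
    by (simp add: adj_cinner[OF lin(2)])
  finally show "cinner h ((adj (\<Phi> x) \<circ> \<Phi> x) k) = cinner h ((adj (\<Psi> x) \<circ> \<Psi> x) k)" .
qed

section \<open>Completely positive maps on Hilbert modules\<close>

lemma hilbert_module_ip_sesquilinear:
  assumes "hilbert_module act ip"
  shows "ip x (y + z) = ip x y + ip x z" "ip x (scaleC c y) = scaleC c (ip x y)"
    and "ip (y + z) x = ip y x + ip z x" "ip (scaleC c y) x = scaleC (cnj c) (ip y x)"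
proof -
  have add: "\<forall>x y z. ip x (y + z) = ip x y + ip x z"
    using assms unfolding hilbert_module_def by (elim conjE) assumption
  have scale: "\<forall>c x y. ip x (scaleC c y) = scaleC c (ip x y)"
    using assms unfolding hilbert_module_def by (elim conjE) assumption
  have sym: "\<forall>x y. ip y x = cstar (ip x y)"
    using assms unfolding hilbert_module_def by (elim conjE) assumption
  show "ip x (y + z) = ip x y + ip x z" "ip x (scaleC c y) = scaleC c (ip x y)"
    using add scale by blast+
  show "ip (y + z) x = ip y x + ip z x"
    using add sym cstar_add by metis
  show "ip (scaleC c y) x = scaleC (cnj c) (ip y x)"
    using scale sym cstar_scaleC by metis
qed

lemma completely_positive_add: "completely_positive \<phi> \<Longrightarrow> \<phi> (a + b) h = \<phi> a h + \<phi> b h"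
  by (simp add: completely_positive_def)

lemma completely_positive_scaleC: "completely_positive \<phi> \<Longrightarrow> \<phi> (scaleC c a) h = scaleC c (\<phi> a h)"
  by (simp add: completely_positive_def)

lemma cp_equiv_imp_cinner_eq:
  fixes act :: "'x::complex_banach \<Rightarrow> 'a::cstar_algebra \<Rightarrow> 'x"
    and \<Phi> \<Psi> :: "'x \<Rightarrow> 'h::chilbert_space \<Rightarrow> 'k::chilbert_space"
  assumes hm: "hilbert_module act ip" and "\<Phi> \<in> CP_maps ip" "\<Psi> \<in> CP_maps ip"
    and eq: "cp_equiv \<Phi> \<Psi>"
  shows "cinner (\<Phi> x h) (\<Phi> y k) = cinner (\<Psi> x h) (\<Psi> y k)"
proof -
  obtain \<phi> :: "'a \<Rightarrow> 'h \<Rightarrow> 'h" where \<phi>: "completely_positive \<phi>"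
    and lin\<Phi>: "\<And>x. bclinear (\<Phi> x)" and \<Phi>: "\<And>x y. adj (\<Phi> x) \<circ> \<Phi> y = \<phi> (ip x y)"
    using \<open>\<Phi> \<in> CP_maps ip\<close> unfolding CP_maps_def by blast
  obtain \<psi> :: "'a \<Rightarrow> 'h \<Rightarrow> 'h" where \<psi>: "completely_positive \<psi>"
    and lin\<Psi>: "\<And>x. bclinear (\<Psi> x)" and \<Psi>: "\<And>x y. adj (\<Psi> x) \<circ> \<Psi> y = \<psi> (ip x y)"
    using \<open>\<Psi> \<in> CP_maps ip\<close> unfolding CP_maps_def by blast
  note ip = hilbert_module_ip_sesquilinear[OF hm]
  define H where "H x y = cinner h (\<phi> (ip x y) k) - cinner h (\<psi> (ip x y) k)" for x y
  have "H x y = 0"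
  proof (rule polarization_zero)
    show "H x x = 0" for x
      using eq \<Phi>[of x x] \<Psi>[of x x] unfolding H_def cp_equiv_def by simp
  qed (simp_all add: H_def ip completely_positive_add[OF \<phi>] completely_positive_add[OF \<psi>]
      completely_positive_scaleC[OF \<phi>] completely_positive_scaleC[OF \<psi>]
      cinner_add_right cinner_scaleC_right algebra_simps)
  thus ?thesis
    using fun_cong[OF \<Phi>[of x y], of k] fun_cong[OF \<Psi>[of x y], of k]
    by (simp add: H_def adj_cinner[OF lin\<Phi>] adj_cinner[OF lin\<Psi>])
qed

theorem proposition2p3:
  fixes act :: "'x::complex_banach \<Rightarrow> 'a::cstar_algebra \<Rightarrow> 'x"
    and ip :: "'x \<Rightarrow> 'x \<Rightarrow> 'a"
    and \<Phi> \<Psi> :: "'x \<Rightarrow> 'h::chilbert_space \<Rightarrow> 'k::chilbert_space"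
  assumes "hilbert_module act ip"
    and "full_module ip"
    and "\<Phi> \<in> CP_maps ip"
    and "\<Psi> \<in> CP_maps ip"
  shows "cp_equiv \<Phi> \<Psi> \<longleftrightarrow>
    (\<exists>V. partial_isometry V \<and>
         V \<circ> adj V = proj (ccspan {\<Phi> x h | x h. True}) \<and>
         adj V \<circ> V = proj (ccspan {\<Psi> x h | x h. True}) \<and>
         (\<forall>x. \<Phi> x = V \<circ> \<Psi> x))"
proof -
  have lin: "\<And>x. bclinear (\<Phi> x)" "\<And>x. bclinear (\<Psi> x)"
    using assms(3,4) unfolding CP_maps_def by blast+
  show ?thesis
    by (intro iffI factorization_of_cinner_eq[OF lin] cp_equiv_imp_cinner_eq[OF assms(1,3,4)])
      (auto intro: cp_equiv_of_factorization[OF lin])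
qed

end
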